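(* In the $L^p$ setting of the context (with $1<p<\infty$), suppose $G$ acts metrically freely. Then for every finite set $F\subset G$ and every family $a_g\in A$, $g\in F$, $$\Big\|\sum_{g\in F}\bar a_gV_g\Big\|_{L(H)}\le\Big\|\sum_{g\in F}a_gT_g\Big\|_{L(D)},$$ i.e. the map $B(A,T_g)\to B(\bar A,V_g)$ determined by $a\mapsto\bar a$, $T_g\mapsto V_g$ is norm decreasing. No amenability of $G$ is assumed.
   Context: Setting: $(\Omega,\mu)$ is a measure space with $\sigma$-additive $\sigma$-finite measure $\mu$, $E$ a Banach space, $G$ a discrete group, $\{\alpha_g\}_{g\in G}$ a group of invertible measurable maps $\Omega\to\Omega$ ($\alpha_{gh}=\alpha_g\circ\alpha_h$, $\alpha_e=\mathrm{id}$) such that $\alpha_g$ and $\alpha_g^{-1}$ preserve $\mu$-null sets. $D=L^p_\mu(\Omega,E)$; $A=L^\infty_\mu(\Omega,L(E))$ acts on $D$ by $(af)(x)=a(x)f(x)$; $(T_gf)(x)=\rho_g(x)^{1/p}f(\alpha_g^{-1}(x))$, where $\rho_g$ is the Radon–Nikodym derivative of the measure $\Delta\mapsto\mu(\alpha_g^{-1}(\Delta))$ with respect to $\mu$ (so $T_g$ is an isometry and $T_gaT_g^{-1}=\hat T_g(a)$ with $\hat T_g(a)(x)=a(\alpha_g^{-1}(x))$). $B(A,T_g)$ is the closed subalgebra of $L(D)$ generated by $A$ and the $T_g$. $G$ acts metrically freely if for every finite $\{g_1,\dots,g_k\}\subset G$ and measurable $\Delta$ with $\mu(\Delta)>0$ there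 is measurable $\Delta'\subset\Delta$, $\mu(\Delta')>0$, with $\mu(\alpha_{g_i}(\Delta')\cap\alpha_{g_j}(\Delta'))=0$ for $i\neq j$. Regular representation: $H=l^p(G,D)$; $(V_{g_0}\xi)(g)=\xi(gg_0)$; $(\bar a\xi)(g)=\hat T_g(a)\xi(g)$; $B(\bar A,V_g)$ is the closed subalgebra of $L(H)$ generated by $\bar A=\{\bar a:a\in A\}$ and the $V_g$. *)

theory Defs
  imports "HOL-Analysis.Analysis"
begin

definition strongly_measurable :: "'a measure \<Rightarrow> ('a \<Rightarrow> 'b::topological_space) \<Rightarrow> bool" where
  "strongly_measurable M f \<longleftrightarrow>
     (\<exists>s :: nat \<Rightarrow> 'a \<Rightarrow> 'b. (\<forall>n. simple_function M (s n)) \<and>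
        (AE x in M. (\<lambda>n. s n x) \<longlonglongrightarrow> f x))"

definition Lp_pow :: "'a measure \<Rightarrow> real \<Rightarrow> ('a \<Rightarrow> 'e::real_normed_vector) \<Rightarrow> ennreal" where
  "Lp_pow M p f = (\<integral>\<^sup>+ x. ennreal (norm (f x) powr p) \<partial>M)"

definition Lp_norm :: "'a measure \<Rightarrow> real \<Rightarrow> ('a \<Rightarrow> 'e::real_normed_vector) \<Rightarrow> ennreal" where
  "Lp_norm M p f = (if Lp_pow M p f = \<infinity> then \<infinity> else ennreal (enn2real (Lp_pow M p f) powr (1 / p)))"

text \<open>D = L^p_mu(Omega, E) (representatives).\<close>
definition LpD :: "'a measure \<Rightarrow> real \<Rightarrow> ('a \<Rightarrow> 'e::real_normed_vector) set" where
  "LpD M p = {f. strongly_measurable M f \<and> Lp_pow M p f < \<infinity>}"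

text \<open>A = L^infinity_mu(Omega, L(E)) (representatives).\<close>
definition LinfA :: "'a measure \<Rightarrow> ('a \<Rightarrow> ('e::real_normed_vector \<Rightarrow>\<^sub>L 'e)) set" where
  "LinfA M = {a. strongly_measurable M a \<and> (\<exists>B. AE x in M. norm (a x) \<le> B)}"

text \<open>H = l^p(G, D): the p-th power of the norm is the sum over G of the p-th powers.\<close>
definition lp_pow_H :: "'a measure \<Rightarrow> real \<Rightarrow> ('g \<Rightarrow> 'a \<Rightarrow> 'e::real_normed_vector) \<Rightarrow> ennreal" where
  "lp_pow_H M p \<xi> = (\<Sum>\<^sub>\<infinity> g\<in>UNIV. Lp_pow M p (\<xi> g))"

definition lp_norm_H :: "'a measure \<Rightarrow> real \<Rightarrow> ('g \<Rightarrow> 'a \<Rightarrow> 'e::real_normed_vector) \<Rightarrow> ennreal" where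
  "lp_norm_H M p \<xi> = (if lp_pow_H M p \<xi> = \<infinity> then \<infinity> else ennreal (enn2real (lp_pow_H M p \<xi>) powr (1 / p)))"

definition lpH :: "'a measure \<Rightarrow> real \<Rightarrow> ('g \<Rightarrow> 'a \<Rightarrow> 'e::real_normed_vector) set" where
  "lpH M p = {\<xi>. (\<forall>g. \<xi> g \<in> LpD M p) \<and> lp_pow_H M p \<xi> < \<infinity>}"

definition opnorm_D :: "'a measure \<Rightarrow> real \<Rightarrow> (('a \<Rightarrow> 'e::real_normed_vector) \<Rightarrow> ('a \<Rightarrow> 'e)) \<Rightarrow> ennreal" where
  "opnorm_D M p S = (SUP f\<in>{f\<in>LpD M p. Lp_norm M p f \<le> 1}. Lp_norm M p (S f))"

definition opnorm_H :: "'a measure \<Rightarrow> real \<Rightarrow> (('g \<Rightarrow> 'a \<Rightarrow> 'e::real_normed_vector) \<Rightarrow> ('g \<Rightarrow> 'a \<Rightarrow> 'e)) \<Rightarrow> ennreal" where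
  "opnorm_H M p S = (SUP \<xi>\<in>{\<xi>\<in>lpH M p. lp_norm_H M p \<xi> \<le> 1}. lp_norm_H M p (S \<xi>))"

text \<open>Group G written additively (type class group_add, not necessarily commutative): gh = g + h,
  e = 0, g^{-1} = - g.  The maps alpha g are invertible with inverse alpha (- g).\<close>

definition rho :: "'a measure \<Rightarrow> ('g::group_add \<Rightarrow> 'a \<Rightarrow> 'a) \<Rightarrow> 'g \<Rightarrow> 'a \<Rightarrow> ennreal" where
  "rho M \<alpha> g = RN_deriv M (distr M M (\<alpha> g))"

definition Top :: "'a measure \<Rightarrow> real \<Rightarrow> ('g::group_add \<Rightarrow> 'a \<Rightarrow> 'a) \<Rightarrow> 'g \<Rightarrow> ('a \<Rightarrow> 'e::real_normed_vector) \<Rightarrow> 'a \<Rightarrow> 'e" where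
  "Top M p \<alpha> g f x = (enn2real (rho M \<alpha> g x) powr (1 / p)) *\<^sub>R f (\<alpha> (- g) x)"

definition S_D :: "'a measure \<Rightarrow> real \<Rightarrow> ('g::group_add \<Rightarrow> 'a \<Rightarrow> 'a) \<Rightarrow> 'g set \<Rightarrow> ('g \<Rightarrow> 'a \<Rightarrow> ('e::real_normed_vector \<Rightarrow>\<^sub>L 'e))
    \<Rightarrow> ('a \<Rightarrow> 'e) \<Rightarrow> 'a \<Rightarrow> 'e" where
  "S_D M p \<alpha> F a f x = (\<Sum>g\<in>F. blinfun_apply (a g x) (Top M p \<alpha> g f x))"

definition Vop :: "'g::group_add \<Rightarrow> ('g \<Rightarrow> 'a \<Rightarrow> 'e) \<Rightarrow> 'g \<Rightarrow> 'a \<Rightarrow> 'e" where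
  "Vop g0 \<xi> g = \<xi> (g + g0)"

definition bar_op :: "('g::group_add \<Rightarrow> 'a \<Rightarrow> 'a) \<Rightarrow> ('a \<Rightarrow> ('e::real_normed_vector \<Rightarrow>\<^sub>L 'e))
    \<Rightarrow> ('g \<Rightarrow> 'a \<Rightarrow> 'e) \<Rightarrow> 'g \<Rightarrow> 'a \<Rightarrow> 'e" where
  "bar_op \<alpha> b \<xi> g x = blinfun_apply (b (\<alpha> (- g) x)) (\<xi> g x)"

definition S_H :: "('g::group_add \<Rightarrow> 'a \<Rightarrow> 'a) \<Rightarrow> 'g set \<Rightarrow> ('g \<Rightarrow> 'a \<Rightarrow> ('e::real_normed_vector \<Rightarrow>\<^sub>L 'e))
    \<Rightarrow> ('g \<Rightarrow> 'a \<Rightarrow> 'e) \<Rightarrow> 'g \<Rightarrow> 'a \<Rightarrow> 'e" where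
  "S_H \<alpha> F a \<xi> h x = (\<Sum>g\<in>F. bar_op \<alpha> (a g) (Vop g \<xi>) h x)"

definition metrically_free :: "'a measure \<Rightarrow> ('g \<Rightarrow> 'a \<Rightarrow> 'a) \<Rightarrow> bool" where
  "metrically_free M \<alpha> \<longleftrightarrow>
    (\<forall>F. finite F \<longrightarrow> (\<forall>\<Delta>\<in>sets M. emeasure M \<Delta> > 0 \<longrightarrow>
       (\<exists>\<Delta>'\<in>sets M. \<Delta>' \<subseteq> \<Delta> \<and> emeasure M \<Delta>' > 0 \<and>
          (\<forall>g\<in>F. \<forall>h\<in>F. g \<noteq> h \<longrightarrow> emeasure M (\<alpha> g ` \<Delta>' \<inter> \<alpha> h ` \<Delta>') = 0))))"

end

(*
  Let n be the norm of the operator sum_g a_g T_g on D.  For xi in H and a finite K in G put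
  L = K + F.  The heart of the proof is the pointwise estimate
    sum_(h in K) |(sum_g bar a_g V_g xi)(h)(x)|^p  <=  n^p * sum_(k in L) |xi(k)(x)|^p   for a.e. x,
  which, integrated and summed over all finite K, gives the theorem.  If the estimate failed on a
  set of positive measure, metric freeness would give a subset D of positive measure whose
  preimages alpha_k^-1(D), k in K union L, are pairwise disjoint.  On these disjoint pieces the
  functions xi(k) restricted to D, transported by alpha_k and weighted by rho_k^(-1/p), glue to a
  single f in D with ||f||^p = sum_k int_D |xi(k)|^p.  By the cocycle identity
  rho_(h+g)(alpha_h x) = rho_h(alpha_h x) rho_g(x), the function sum_g a_g T_g f on alpha_h^-1(D)
  is the transported copy of the h-th component of sum_g bar a_g V_g xi on D, so
  ||sum_g a_g T_g f|| <= n ||f|| is exactly the estimate integrated over D.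
  Both operators depend only on the a.e.-classes of the a_g and of the components of xi, so all of
  them may be replaced by representatives whose norms are Borel measurable.
*)
theory Submission
  imports Defs
begin

section \<open>Strongly measurable representatives\<close>

text \<open>Unlike the a.e. notion \<open>strongly_measurable\<close>, this makes norms Borel measurable.\<close>

definition strongly_measurable_everywhere :: "'a measure \<Rightarrow> ('a \<Rightarrow> 'b::real_normed_vector) \<Rightarrow> bool" where
  "strongly_measurable_everywhere M f \<longleftrightarrow>
     (\<exists>s. (\<forall>n. simple_function M (s n)) \<and> (\<forall>x\<in>space M. (\<lambda>n. s n x) \<longlonglongrightarrow> f x))"

lemma strongly_measurable_everywhereI:
  "(\<And>n. simple_function M (s n)) \<Longrightarrow> (\<And>x. x \<in> space M \<Longrightarrow> (\<lambda>n. s n x) \<longlonglongrightarrow> f x)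
    \<Longrightarrow> strongly_measurable_everywhere M f"
  unfolding strongly_measurable_everywhere_def by blast

lemma strongly_measurable_everywhere_const: "strongly_measurable_everywhere M (\<lambda>x. c)"
  by (rule strongly_measurable_everywhereI[of _ "\<lambda>n x. c"]) auto

lemma strongly_measurable_everywhere_compose2:
  assumes "strongly_measurable_everywhere M f" "strongly_measurable_everywhere M g"
    and "\<And>x u v. u \<longlonglongrightarrow> f x \<Longrightarrow> v \<longlonglongrightarrow> g x \<Longrightarrow> (\<lambda>n. h (u n) (v n)) \<longlonglongrightarrow> h (f x) (g x)"
  shows "strongly_measurable_everywhere M (\<lambda>x. h (f x) (g x))"
proof -
  obtain s where s: "\<And>n. simple_function M (s n)" "\<And>x. x \<in> space M \<Longrightarrow> (\<lambda>n. s n x) \<longlonglongrightarrow> f x"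
    using assms(1) unfolding strongly_measurable_everywhere_def by blast
  obtain t where t: "\<And>n. simple_function M (t n)" "\<And>x. x \<in> space M \<Longrightarrow> (\<lambda>n. t n x) \<longlonglongrightarrow> g x"
    using assms(2) unfolding strongly_measurable_everywhere_def by blast
  show ?thesis
    by (rule strongly_measurable_everywhereI[of _ "\<lambda>n x. h (s n x) (t n x)"])
      (auto intro: simple_function_compose2 s t assms(3))
qed

lemma strongly_measurable_everywhere_sum:
  "finite I \<Longrightarrow> (\<And>i. i \<in> I \<Longrightarrow> strongly_measurable_everywhere M (f i))
    \<Longrightarrow> strongly_measurable_everywhere M (\<lambda>x. \<Sum>i\<in>I. f i x)"
proof (induction I rule: finite_induct)
  case empty
  then show ?case by (simp add: strongly_measurable_everywhere_const)
next
  case (insert i I)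
  have "strongly_measurable_everywhere M (\<lambda>x. f i x + (\<Sum>i\<in>I. f i x))"
    by (rule strongly_measurable_everywhere_compose2) (use insert in \<open>auto intro: tendsto_add\<close>)
  with insert show ?case by simp
qed

lemma strongly_measurable_everywhere_blinfun_apply:
  "strongly_measurable_everywhere M A \<Longrightarrow> strongly_measurable_everywhere M f
    \<Longrightarrow> strongly_measurable_everywhere M (\<lambda>x. blinfun_apply (A x) (f x))"
  by (rule strongly_measurable_everywhere_compose2) (auto intro: blinfun.tendsto)

lemma borel_measurable_imp_strongly_measurable_everywhere:
  fixes r :: "'a \<Rightarrow> real"
  assumes "r \<in> borel_measurable M"
  shows "strongly_measurable_everywhere M r"
  using borel_measurable_implies_sequence_metric[OF assms, of 0]
  unfolding strongly_measurable_everywhere_def by blast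

lemma strongly_measurable_everywhere_scaleR:
  "r \<in> borel_measurable M \<Longrightarrow> strongly_measurable_everywhere M f
    \<Longrightarrow> strongly_measurable_everywhere M (\<lambda>x. r x *\<^sub>R f x)"
  by (rule strongly_measurable_everywhere_compose2[OF borel_measurable_imp_strongly_measurable_everywhere])
    (auto intro: tendsto_scaleR)

lemma strongly_measurable_everywhere_compose_measurable:
  assumes T: "T \<in> measurable M M" and f: "strongly_measurable_everywhere M f"
  shows "strongly_measurable_everywhere M (\<lambda>x. f (T x))"
proof -
  obtain s where s: "\<And>n. simple_function M (s n)" "\<And>x. x \<in> space M \<Longrightarrow> (\<lambda>n. s n x) \<longlonglongrightarrow> f x"
    using f unfolding strongly_measurable_everywhere_def by blast
  show ?thesis
    by (rule strongly_measurable_everywhereI[of _ "\<lambda>n x. s n (T x)"])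
      (auto intro: simple_function_comp[OF T] s measurable_space[OF T])
qed

lemma strongly_measurable_everywhere_imp_borel_norm:
  assumes "strongly_measurable_everywhere M f"
  shows "(\<lambda>x. norm (f x)) \<in> borel_measurable M"
proof -
  obtain s where s: "\<And>n. simple_function M (s n)" "\<And>x. x \<in> space M \<Longrightarrow> (\<lambda>n. s n x) \<longlonglongrightarrow> f x"
    using assms unfolding strongly_measurable_everywhere_def by blast
  show ?thesis
  proof (rule borel_measurable_LIMSEQ_metric[of "\<lambda>n x. norm (s n x)"])
    show "(\<lambda>x. norm (s n x)) \<in> borel_measurable M" for n
      by (rule borel_measurable_simple_function, rule simple_function_compose1[OF s(1)])
  qed (auto intro: tendsto_norm s)
qed

lemma strongly_measurable_everywhere_imp_strongly_measurable:
  "strongly_measurable_everywhere M f \<Longrightarrow> strongly_measurable M f"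
  unfolding strongly_measurable_everywhere_def strongly_measurable_def by (auto intro!: AE_I2)

lemma sets_Collect_Cauchy:
  fixes s :: "nat \<Rightarrow> 'a \<Rightarrow> 'b::metric_space"
  assumes s: "\<And>n. simple_function M (s n)"
  shows "{x\<in>space M. Cauchy (\<lambda>n. s n x)} \<in> sets M"
proof -
  have dist_sets: "{x\<in>space M. dist (s m x) (s n x) < e} \<in> sets M" for m n e
  proof -
    have "(\<lambda>x. dist (s m x) (s n x)) \<in> borel_measurable M"
      by (rule borel_measurable_simple_function, rule simple_function_compose2[OF s s])
    then show ?thesis by measurable
  qed
  have "{x\<in>space M. Cauchy (\<lambda>n. s n x)} =
      (\<Inter>j. \<Union>N. \<Inter>m\<in>{N..}. \<Inter>n\<in>{N..}. {x\<in>space M. dist (s m x) (s n x) < inverse (real (Suc j))}) \<inter> space M"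
    unfolding metric_Cauchy_iff2 by (rule set_eqI, simp, blast)
  also have "\<dots> \<in> sets M"
    using dist_sets by (intro sets.Int sets.countable_INT sets.countable_UN) auto
  finally show ?thesis .
qed

lemma strongly_measurable_AE_eq_everywhere:
  fixes f :: "'a \<Rightarrow> 'b::banach"
  assumes "strongly_measurable M f"
  obtains f' where "strongly_measurable_everywhere M f'" "AE x in M. f x = f' x"
proof -
  obtain s where s: "\<And>n. simple_function M (s n)" and ae: "AE x in M. (\<lambda>n. s n x) \<longlonglongrightarrow> f x"
    using assms unfolding strongly_measurable_def by blast
  define C where "C = {x\<in>space M. Cauchy (\<lambda>n. s n x)}"
  have C: "C \<in> sets M"
    unfolding C_def using s by (rule sets_Collect_Cauchy)
  define f' where "f' x = (if x \<in> C then lim (\<lambda>n. s n x) else 0)" for x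
  have "strongly_measurable_everywhere M f'"
  proof (rule strongly_measurable_everywhereI[of _ "\<lambda>n x. if x \<in> C then s n x else 0"])
    show "simple_function M (\<lambda>x. if x \<in> C then s n x else 0)" for n
      using C s[of n] by (intro simple_function_If_set) auto
    show "(\<lambda>n. if x \<in> C then s n x else 0) \<longlonglongrightarrow> f' x" for x
      by (cases "x \<in> C") (auto simp: f'_def C_def Cauchy_convergent_iff convergent_LIMSEQ_iff)
  qed
  moreover have "AE x in M. f x = f' x"
    using ae AE_space
  proof eventually_elim
    case (elim x)
    then have "x \<in> C" unfolding C_def using LIMSEQ_imp_Cauchy by blast
    then show ?case unfolding f'_def using elim by (simp add: limI)
  qed
  ultimately show ?thesis using that by blast
qed

lemma strongly_measurable_family_AE_eq_everywhere:
  fixes f :: "'i \<Rightarrow> 'a \<Rightarrow> 'b::banach"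
  assumes "\<And>i. i \<in> I \<Longrightarrow> strongly_measurable M (f i)"
  shows "\<exists>g. \<forall>i\<in>I. strongly_measurable_everywhere M (g i) \<and> (AE x in M. f i x = g i x)"
proof -
  have "\<exists>g. strongly_measurable_everywhere M g \<and> (AE x in M. f i x = g x)" if "i \<in> I" for i
    by (rule strongly_measurable_AE_eq_everywhere[OF assms[OF that]]) blast
  then show ?thesis by (intro bchoice) blast
qed

section \<open>\<open>L\<^sup>p\<close> norms and operator norms\<close>

lemma ennreal_root_le_iff:
  fixes X :: ennreal and n p :: real
  assumes n: "0 \<le> n" and p: "0 < p"
  shows "(if X = \<infinity> then \<infinity> else ennreal (enn2real X powr (1/p))) \<le> ennreal n \<longleftrightarrow> X \<le> ennreal (n powr p)"
proof (cases "X = \<infinity>")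
  case True
  then show ?thesis by (simp add: top_unique)
next
  case False
  then obtain x where x: "X = ennreal x" "0 \<le> x" by (cases X) auto
  have "x powr (1/p) \<le> n \<longleftrightarrow> x \<le> n powr p"
  proof
    assume "x powr (1/p) \<le> n"
    then have "(x powr (1/p)) powr p \<le> n powr p" using p x by (intro powr_mono2) auto
    then show "x \<le> n powr p" using p x by (simp add: powr_powr)
  next
    assume "x \<le> n powr p"
    then have "x powr (1/p) \<le> (n powr p) powr (1/p)" using p x by (intro powr_mono2) auto
    then show "x powr (1/p) \<le> n" using p n by (simp add: powr_powr)
  qed
  then show ?thesis using x n by (simp add: ennreal_le_iff)
qed

lemma Lp_norm_le_iff:
  "0 \<le> n \<Longrightarrow> 0 < p \<Longrightarrow> Lp_norm M p f \<le> ennreal n \<longleftrightarrow> Lp_pow M p f \<le> ennreal (n powr p)"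
  unfolding Lp_norm_def by (rule ennreal_root_le_iff)

lemma lp_norm_H_le_iff:
  "0 \<le> n \<Longrightarrow> 0 < p \<Longrightarrow> lp_norm_H M p \<xi> \<le> ennreal n \<longleftrightarrow> lp_pow_H M p \<xi> \<le> ennreal (n powr p)"
  unfolding lp_norm_H_def by (rule ennreal_root_le_iff)

lemma Lp_pow_cong_AE:
  "AE x in M. norm (f x) = norm (g x) \<Longrightarrow> Lp_pow M p f = Lp_pow M p g"
  unfolding Lp_pow_def by (rule nn_integral_cong_AE) auto

lemma lp_pow_H_cong_AE:
  assumes "\<And>k. AE x in M. norm (\<xi> k x) = norm (\<eta> k x)"
  shows "lp_pow_H M p \<xi> = lp_pow_H M p \<eta>"
proof -
  have "Lp_pow M p (\<xi> k) = Lp_pow M p (\<eta> k)" for k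
    by (rule Lp_pow_cong_AE) (rule assms)
  then show ?thesis unfolding lp_pow_H_def by simp
qed

lemma Lp_pow_scaleR:
  assumes [measurable]: "(\<lambda>x. norm (f x)) \<in> borel_measurable M" and c: "0 \<le> c"
  shows "Lp_pow M p (\<lambda>x. c *\<^sub>R f x) = ennreal (c powr p) * Lp_pow M p f"
proof -
  have "Lp_pow M p (\<lambda>x. c *\<^sub>R f x) = (\<integral>\<^sup>+x. ennreal (c powr p) * ennreal (norm (f x) powr p) \<partial>M)"
    unfolding Lp_pow_def using c by (intro nn_integral_cong) (simp add: powr_mult ennreal_mult)
  also have "\<dots> = ennreal (c powr p) * Lp_pow M p f"
    unfolding Lp_pow_def by (rule nn_integral_cmult) measurable
  finally show ?thesis .
qed

lemma set_nn_integral_le_Lp_pow: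
  "(\<integral>\<^sup>+x\<in>D. ennreal (norm (f x) powr p) \<partial>M) \<le> Lp_pow M p f"
  unfolding Lp_pow_def by (intro nn_integral_mono) (auto split: split_indicator)

lemma lp_pow_H_ge_sum:
  "finite L \<Longrightarrow> (\<Sum>k\<in>L. Lp_pow M p (\<xi> k)) \<le> lp_pow_H M p \<xi>"
  unfolding lp_pow_H_def nonneg_infsum_complete[OF zero_le] by (rule SUP_upper) simp

lemma lp_pow_H_leI:
  "(\<And>K. finite K \<Longrightarrow> (\<Sum>k\<in>K. Lp_pow M p (\<xi> k)) \<le> B) \<Longrightarrow> lp_pow_H M p \<xi> \<le> B"
  unfolding lp_pow_H_def nonneg_infsum_complete[OF zero_le] by (auto intro!: SUP_least)

lemma opnorm_D_cong_AE:
  assumes "\<And>f. AE x in M. S f x = S' f x"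
  shows "opnorm_D M p S = opnorm_D M p S'"
proof -
  have "Lp_pow M p (S f) = Lp_pow M p (S' f)" for f
    by (rule Lp_pow_cong_AE) (use assms[of f] in \<open>auto elim: eventually_mono\<close>)
  then show ?thesis unfolding opnorm_D_def Lp_norm_def by simp
qed

lemma opnorm_H_cong_AE:
  assumes "\<And>\<xi> h. AE x in M. S \<xi> h x = S' \<xi> h x"
  shows "opnorm_H M p S = opnorm_H M p S'"
proof -
  have "lp_pow_H M p (S \<xi>) = lp_pow_H M p (S' \<xi>)" for \<xi>
  proof (rule lp_pow_H_cong_AE)
    show "AE x in M. norm (S \<xi> k x) = norm (S' \<xi> k x)" for k
      using assms[of \<xi> k] by eventually_elim simp
  qed
  then show ?thesis unfolding opnorm_H_def lp_norm_H_def by simp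
qed

lemma ennreal_le_mult_if_scaled_le:
  fixes P Q :: ennreal and N :: real
  assumes P: "P < \<infinity>" and N: "0 \<le> N"
    and scaled: "\<And>t. 0 < t \<Longrightarrow> ennreal t * P \<le> 1 \<Longrightarrow> ennreal t * Q \<le> ennreal N"
  shows "Q \<le> ennreal N * P"
proof -
  obtain P' where P': "P = ennreal P'" "0 \<le> P'" using P by (cases P) auto
  show ?thesis
  proof (cases "P' = 0")
    case False
    then have inverse: "ennreal (1 / P') * P = 1"
      using P' by (simp add: ennreal_mult[symmetric])
    have "Q = (ennreal (1 / P') * P) * Q" by (simp add: inverse)
    also have "\<dots> = P * (ennreal (1 / P') * Q)" by (simp add: ac_simps)
    also have "\<dots> \<le> P * ennreal N"
      using scaled[of "1 / P'"] False P' inverse by (intro mult_left_mono) auto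
    finally show ?thesis by (simp add: mult.commute)
  next
    case True
    have Q_le: "ennreal t * Q \<le> ennreal N" if "0 < t" for t
      using scaled[OF that] P' True by simp
    obtain q where q: "Q = ennreal q" "0 \<le> q"
      using Q_le[of 1] by (cases Q) (auto simp: top_unique)
    have "q = 0"
    proof (rule ccontr)
      assume "q \<noteq> 0"
      then have "ennreal ((N + 1) / q) * Q = ennreal (N + 1)"
        using q N by (simp add: ennreal_mult[symmetric])
      then have "ennreal (N + 1) \<le> ennreal N"
        using Q_le[of "(N + 1) / q"] q N \<open>q \<noteq> 0\<close> by simp
      then show False using N by (simp add: ennreal_le_iff)
    qed
    then show ?thesis using q by simp
  qed
qed

lemma Lp_pow_le_opnorm_D:
  assumes p: "0 < p" and n: "0 \<le> n" and opnorm: "opnorm_D M p S \<le> ennreal n"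
    and f: "strongly_measurable_everywhere M f" "Lp_pow M p f < \<infinity>"
    and Sf: "(\<lambda>x. norm (S f x)) \<in> borel_measurable M"
    and homogeneous: "\<And>c. 0 \<le> c \<Longrightarrow> S (\<lambda>x. c *\<^sub>R f x) = (\<lambda>x. c *\<^sub>R S f x)"
  shows "Lp_pow M p (S f) \<le> ennreal (n powr p) * Lp_pow M p f"
proof (rule ennreal_le_mult_if_scaled_le[OF f(2)])
  fix t :: real assume t: "0 < t" "ennreal t * Lp_pow M p f \<le> 1"
  define c where "c = t powr (1/p)"
  have c: "0 \<le> c" "c powr p = t"
    unfolding c_def using t p by (auto simp: powr_powr)
  have "strongly_measurable_everywhere M (\<lambda>x. c *\<^sub>R f x)"
    by (intro strongly_measurable_everywhere_scaleR f) simp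
  moreover have "Lp_pow M p (\<lambda>x. c *\<^sub>R f x) \<le> 1"
    using Lp_pow_scaleR[OF strongly_measurable_everywhere_imp_borel_norm[OF f(1)] c(1)] c(2) t(2) by simp
  ultimately have "(\<lambda>x. c *\<^sub>R f x) \<in> {f\<in>LpD M p. Lp_norm M p f \<le> 1}"
    using Lp_norm_le_iff[of 1 p M] p ennreal_one_less_top
    by (auto simp: LpD_def strongly_measurable_everywhere_imp_strongly_measurable
        intro: le_less_trans)
  then have "Lp_norm M p (S (\<lambda>x. c *\<^sub>R f x)) \<le> opnorm_D M p S"
    unfolding opnorm_D_def by (rule SUP_upper)
  then have "Lp_norm M p (S (\<lambda>x. c *\<^sub>R f x)) \<le> ennreal n"
    using opnorm by (rule order_trans)
  then have "Lp_pow M p (S (\<lambda>x. c *\<^sub>R f x)) \<le> ennreal (n powr p)"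
    using Lp_norm_le_iff[OF n p] by blast
  moreover have "Lp_pow M p (S (\<lambda>x. c *\<^sub>R f x)) = ennreal t * Lp_pow M p (S f)"
    using Lp_pow_scaleR[OF Sf c(1)] c(2) homogeneous[OF c(1)] by simp
  ultimately show "ennreal t * Lp_pow M p (S f) \<le> ennreal (n powr p)" by simp
qed simp

lemma AE_le_if_local_nn_integral_le:
  fixes U V :: "'a \<Rightarrow> ennreal"
  assumes [measurable]: "U \<in> borel_measurable M" "V \<in> borel_measurable M"
    and local: "\<And>E. E \<in> sets M \<Longrightarrow> 0 < emeasure M E \<Longrightarrow>
      \<exists>D\<in>sets M. D \<subseteq> E \<and> 0 < emeasure M D \<and>
        (\<integral>\<^sup>+x\<in>D. U x \<partial>M) \<le> (\<integral>\<^sup>+x\<in>D. V x \<partial>M) \<and> (\<integral>\<^sup>+x\<in>D. V x \<partial>M) < \<infinity>"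
  shows "AE x in M. U x \<le> V x"
proof (rule ccontr)
  assume not_AE: "\<not> (AE x in M. U x \<le> V x)"
  define E where "E = {x\<in>space M. V x < U x}"
  have E: "E \<in> sets M" unfolding E_def by measurable
  have "0 < emeasure M E"
  proof (rule ccontr)
    assume "\<not> 0 < emeasure M E"
    then have "E \<in> null_sets M" using E by (simp add: null_sets_def)
    then have "AE x in M. U x \<le> V x" by (rule AE_I') (auto simp: E_def not_le)
    with not_AE show False by simp
  qed
  then obtain D where D: "D \<in> sets M" "D \<subseteq> E" "0 < emeasure M D"
    and le: "(\<integral>\<^sup>+x\<in>D. U x \<partial>M) \<le> (\<integral>\<^sup>+x\<in>D. V x \<partial>M)" and fin: "(\<integral>\<^sup>+x\<in>D. V x \<partial>M) < \<infinity>"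
    using local[OF E] by blast
  have [measurable]: "D \<in> sets M" by (rule D(1))
  have "\<not> (AE x in M. U x * indicator D x \<le> V x * indicator D x)"
  proof
    assume "AE x in M. U x * indicator D x \<le> V x * indicator D x"
    then have "AE x in M. x \<notin> D"
      by eventually_elim (use D(2) in \<open>auto simp: E_def indicator_def not_le\<close>)
    then have "emeasure M D = 0"
      using AE_iff_measurable[OF D(1), of "\<lambda>x. x \<notin> D"] sets.sets_into_space[OF D(1)] by auto
    with D(3) show False by simp
  qed
  then have "(\<integral>\<^sup>+x\<in>D. V x \<partial>M) < (\<integral>\<^sup>+x\<in>D. U x \<partial>M)"
    using fin D(2) by (intro nn_integral_less) (auto simp: E_def indicator_def intro!: AE_I2)
  with le show False by simp
qed

lemma set_nn_integral_sum:
  assumes f: "\<And>i. i \<in> I \<Longrightarrow> f i \<in> borel_measurable M" and [measurable]: "A \<in> sets M"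
  shows "(\<integral>\<^sup>+x\<in>A. (\<Sum>i\<in>I. f i x) \<partial>M) = (\<Sum>i\<in>I. \<integral>\<^sup>+x\<in>A. f i x \<partial>M)"
  unfolding sum_distrib_right
proof (rule nn_integral_sum)
  fix i assume "i \<in> I"
  note f[OF this, measurable]
  show "(\<lambda>x. f i x * indicator A x) \<in> borel_measurable M" by measurable
qed

lemma sum_set_nn_integral_le_nn_integral:
  fixes f :: "'a \<Rightarrow> ennreal"
  assumes K: "finite K" and disjoint: "disjoint_family_on A K"
    and A: "\<And>k. k \<in> K \<Longrightarrow> A k \<in> sets M" and f [measurable]: "f \<in> borel_measurable M"
  shows "(\<Sum>k\<in>K. \<integral>\<^sup>+x\<in>A k. f x \<partial>M) \<le> (\<integral>\<^sup>+x. f x \<partial>M)"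
proof -
  have "(\<Sum>k\<in>K. \<integral>\<^sup>+x\<in>A k. f x \<partial>M) = (\<integral>\<^sup>+x. f x * (\<Sum>k\<in>K. indicator (A k) x) \<partial>M)"
    unfolding sum_distrib_left
  proof (rule nn_integral_sum[symmetric])
    fix k assume "k \<in> K"
    note A[OF this, measurable]
    show "(\<lambda>x. f x * indicator (A k) x) \<in> borel_measurable M" by measurable
  qed
  also have "\<dots> = (\<integral>\<^sup>+x. f x * indicator (\<Union>k\<in>K. A k) x \<partial>M)"
    by (simp add: indicator_UN_disjoint[OF K disjoint])
  also have "\<dots> \<le> (\<integral>\<^sup>+x. f x \<partial>M)"
    by (intro nn_integral_mono) (simp split: split_indicator)
  finally show ?thesis .
qed

section \<open>Nonsingular group actions\<close>

locale nonsingular_action =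
  fixes M :: "'a measure" and \<alpha> :: "'g::group_add \<Rightarrow> 'a \<Rightarrow> 'a"
  assumes sigma_finite: "sigma_finite_measure M"
    and \<alpha>_add: "\<And>g h. \<alpha> (g + h) = \<alpha> g \<circ> \<alpha> h"
    and \<alpha>_zero: "\<alpha> 0 = id"
    and \<alpha>_measurable [measurable]: "\<And>g. \<alpha> g \<in> measurable M M"
    and null_vimage: "\<And>g N. N \<in> null_sets M \<Longrightarrow> \<alpha> g -` N \<inter> space M \<in> null_sets M"
begin

lemma \<alpha>_add_apply: "\<alpha> (g + h) x = \<alpha> g (\<alpha> h x)"
  using \<alpha>_add by (simp add: fun_eq_iff)

lemma \<alpha>_minus_cancel [simp]: "\<alpha> (- g) (\<alpha> g x) = x" "\<alpha> g (\<alpha> (- g) x) = x"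
  using \<alpha>_add_apply[of "- g" g x] \<alpha>_add_apply[of g "- g" x] \<alpha>_zero by simp_all

lemma \<alpha>_space: "x \<in> space M \<Longrightarrow> \<alpha> g x \<in> space M"
  by (rule measurable_space[OF \<alpha>_measurable])

lemma image_eq_vimage: "\<alpha> (- g) ` A = \<alpha> g -` A"
  by (auto intro: image_eqI[of _ _ "\<alpha> g x" for x])

lemma vimage_subset_space: "A \<subseteq> space M \<Longrightarrow> \<alpha> g -` A \<subseteq> space M"
  using \<alpha>_space[of _ "- g"] by (metis \<alpha>_minus_cancel(1) subset_iff vimageE)

lemma vimage_sets: "A \<in> sets M \<Longrightarrow> \<alpha> g -` A \<in> sets M"
  using measurable_sets[OF \<alpha>_measurable, of A g] vimage_subset_space[of A g]
  by (simp add: Int_absorb2 sets.sets_into_space)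

lemma vimage_null_sets: "A \<in> null_sets M \<Longrightarrow> \<alpha> g -` A \<in> null_sets M"
  using null_vimage[of A g] vimage_subset_space[of A g]
  by (simp add: Int_absorb2 null_sets.sets_into_space)

lemma image_null_sets: "A \<in> null_sets M \<Longrightarrow> \<alpha> g ` A \<in> null_sets M"
  using image_eq_vimage[of "- g" A] vimage_null_sets[of A "- g"] by simp

lemma AE_compose:
  assumes "AE x in M. P x"
  shows "AE x in M. P (\<alpha> g x)"
proof -
  obtain N where N: "{x\<in>space M. \<not> P x} \<subseteq> N" "N \<in> null_sets M"
    using assms by (auto elim!: AE_E simp: null_sets_def)
  have "{x\<in>space M. \<not> P (\<alpha> g x)} \<subseteq> \<alpha> g -` N"
    using N(1) \<alpha>_space by blast
  with vimage_null_sets[OF N(2)] show ?thesis by (rule AE_I')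
qed

text \<open>The overlaps of the translates are only null; removing their images makes them disjoint.\<close>

lemma metrically_free_disjoint_subset:
  assumes free: "metrically_free M \<alpha>" and J: "finite J"
    and E: "E \<in> sets M" "0 < emeasure M E"
  obtains D where "D \<in> sets M" "D \<subseteq> E" "0 < emeasure M D"
    "disjoint_family_on (\<lambda>j. \<alpha> j -` D) J"
proof -
  obtain D' where D': "D' \<in> sets M" "D' \<subseteq> E" "0 < emeasure M D'"
    and almost_disjoint: "\<And>g h. g \<in> uminus ` J \<Longrightarrow> h \<in> uminus ` J \<Longrightarrow> g \<noteq> h \<Longrightarrow>
      emeasure M (\<alpha> g ` D' \<inter> \<alpha> h ` D') = 0"
    using free J E unfolding metrically_free_def by (metis finite_imageI)
  define Z where "Z = (\<Union>j\<in>J. \<Union>j'\<in>J - {j}. \<alpha> j ` (\<alpha> j -` D' \<inter> \<alpha> j' -` D'))"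
  have "\<alpha> j -` D' \<inter> \<alpha> j' -` D' \<in> null_sets M" if "j \<in> J" "j' \<in> J" "j \<noteq> j'" for j j'
    using almost_disjoint[of "- j" "- j'"] that D'(1)
    by (auto simp: image_eq_vimage vimage_sets null_sets_def)
  then have Z: "Z \<in> null_sets M"
    unfolding Z_def using J by (intro null_sets_UN' countable_finite image_null_sets) auto
  show ?thesis
  proof
    show "D' - Z \<in> sets M" using D'(1) Z by auto
    show "D' - Z \<subseteq> E" using D'(2) by blast
    show "0 < emeasure M (D' - Z)" using D' emeasure_Diff_null_set[OF Z D'(1)] by simp
    show "disjoint_family_on (\<lambda>j. \<alpha> j -` (D' - Z)) J"
      unfolding disjoint_family_on_def Z_def by (auto intro: image_eqI)
  qed
qed

lemma rho_measurable [measurable]: "rho M \<alpha> g \<in> borel_measurable M"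
  unfolding rho_def by simp

lemma density_rho: "density M (rho M \<alpha> g) = distr M M (\<alpha> g)"
proof -
  have "absolutely_continuous M (distr M M (\<alpha> g))"
    using null_vimage by (auto simp: absolutely_continuous_def null_sets_distr_iff)
  then show ?thesis
    unfolding rho_def by (simp add: sigma_finite_measure.density_RN_deriv[OF sigma_finite])
qed

lemma nn_integral_compose:
  assumes [measurable]: "f \<in> borel_measurable M"
  shows "(\<integral>\<^sup>+x. f (\<alpha> g x) \<partial>M) = (\<integral>\<^sup>+x. rho M \<alpha> g x * f x \<partial>M)"
proof -
  have "(\<integral>\<^sup>+x. f (\<alpha> g x) \<partial>M) = integral\<^sup>N (distr M M (\<alpha> g)) f"
    by (simp add: nn_integral_distr)
  also have "\<dots> = (\<integral>\<^sup>+x. rho M \<alpha> g x * f x \<partial>M)"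
    by (simp add: density_rho[symmetric] nn_integral_density)
  finally show ?thesis .
qed

lemma rho_cocycle: "AE x in M. rho M \<alpha> h x * rho M \<alpha> g (\<alpha> (- h) x) = rho M \<alpha> (h + g) x"
proof -
  have density: "density M (\<lambda>x. rho M \<alpha> h x * rho M \<alpha> g (\<alpha> (- h) x)) = distr M M (\<alpha> (h + g))"
  proof (rule measure_eqI)
    fix A assume "A \<in> sets (density M (\<lambda>x. rho M \<alpha> h x * rho M \<alpha> g (\<alpha> (- h) x)))"
    then have [measurable]: "A \<in> sets M" by simp
    have "emeasure (density M (\<lambda>x. rho M \<alpha> h x * rho M \<alpha> g (\<alpha> (- h) x))) A
        = (\<integral>\<^sup>+x. rho M \<alpha> h x * (rho M \<alpha> g (\<alpha> (- h) x) * indicator A x) \<partial>M)"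
      by (simp add: emeasure_density mult.assoc)
    also have "\<dots> = (\<integral>\<^sup>+x. rho M \<alpha> g x * indicator A (\<alpha> h x) \<partial>M)"
      by (simp add: nn_integral_compose[symmetric])
    also have "\<dots> = (\<integral>\<^sup>+x. indicator A (\<alpha> h (\<alpha> g x)) \<partial>M)"
      by (simp add: nn_integral_compose[symmetric])
    also have "\<dots> = (\<integral>\<^sup>+x. indicator (\<alpha> (h + g) -` A \<inter> space M) x \<partial>M)"
      by (rule nn_integral_cong) (auto simp: \<alpha>_add_apply indicator_def)
    also have "\<dots> = emeasure (distr M M (\<alpha> (h + g))) A"
      by (simp add: emeasure_distr)
    finally show "emeasure (density M (\<lambda>x. rho M \<alpha> h x * rho M \<alpha> g (\<alpha> (- h) x))) A
        = emeasure (distr M M (\<alpha> (h + g))) A" .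
  qed simp
  show ?thesis
    using sigma_finite_measure.RN_deriv_unique[OF sigma_finite _ density] unfolding rho_def by simp
qed

lemma rho_zero: "AE x in M. rho M \<alpha> 0 x = 1"
proof -
  have "density M (\<lambda>_. 1) = distr M M (\<alpha> 0)"
    by (simp add: \<alpha>_zero density_1 id_def)
  then have "AE x in M. 1 = rho M \<alpha> 0 x"
    unfolding rho_def by (rule sigma_finite_measure.RN_deriv_unique[OF sigma_finite, rotated]) simp
  then show ?thesis by auto
qed

text \<open>By the cocycle identity for \<open>g\<close> and \<open>- g\<close>, \<open>\<rho>\<^sub>g\<close> has a finite reciprocal a.e.\<close>

lemma rho_pos_finite: "AE x in M. rho M \<alpha> g x \<noteq> 0 \<and> rho M \<alpha> g x \<noteq> \<infinity>"
  using rho_cocycle[of g "- g"] rho_zero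
proof eventually_elim
  case (elim x)
  then have "rho M \<alpha> g x * rho M \<alpha> (- g) (\<alpha> (- g) x) = 1" by simp
  then show ?case by (auto simp: ennreal_top_mult split: if_splits)
qed

definition jacobian :: "'g \<Rightarrow> 'a \<Rightarrow> real" where
  "jacobian g x = enn2real (rho M \<alpha> g x)"

lemma jacobian_measurable [measurable]: "jacobian g \<in> borel_measurable M"
  unfolding jacobian_def by simp

lemma jacobian_nonneg: "0 \<le> jacobian g x"
  unfolding jacobian_def by simp

lemma rho_eq_jacobian: "AE x in M. 0 < jacobian g x \<and> rho M \<alpha> g x = ennreal (jacobian g x)"
  using rho_pos_finite[of g]
  by eventually_elim (auto simp: jacobian_def enn2real_positive_iff less_top[symmetric] zero_less_iff_neq_zero)

lemma jacobian_cocycle: "AE x in M. jacobian h x * jacobian g (\<alpha> (- h) x) = jacobian (h + g) x"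
  using rho_cocycle[of h g] by eventually_elim (simp add: jacobian_def enn2real_mult[symmetric])

lemma nn_integral_compose_divide_jacobian:
  assumes [measurable]: "\<phi> \<in> borel_measurable M" and nonneg: "\<And>x. 0 \<le> \<phi> x"
  shows "(\<integral>\<^sup>+y. ennreal (\<phi> (\<alpha> g y) / jacobian g (\<alpha> g y)) \<partial>M) = (\<integral>\<^sup>+x. ennreal (\<phi> x) \<partial>M)"
proof -
  have "(\<integral>\<^sup>+y. ennreal (\<phi> (\<alpha> g y) / jacobian g (\<alpha> g y)) \<partial>M)
      = (\<integral>\<^sup>+x. rho M \<alpha> g x * ennreal (\<phi> x / jacobian g x) \<partial>M)"
    by (rule nn_integral_compose) measurable
  also have "\<dots> = (\<integral>\<^sup>+x. ennreal (\<phi> x) \<partial>M)"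
    using rho_eq_jacobian[of g]
    by (intro nn_integral_cong_AE, eventually_elim)
      (simp add: ennreal_mult[symmetric] nonneg jacobian_nonneg)
  finally show ?thesis .
qed

end

lemma S_D_scaleR: "S_D M p \<alpha> F a (\<lambda>x. c *\<^sub>R f x) = (\<lambda>x. c *\<^sub>R S_D M p \<alpha> F a f x)"
  by (simp add: fun_eq_iff S_D_def Top_def scaleR_sum_right blinfun.scaleR_right mult.commute)

lemma S_D_cong_AE:
  assumes "finite F" "\<And>g. g \<in> F \<Longrightarrow> AE x in M. a g x = b g x"
  shows "AE x in M. S_D M p \<alpha> F a f x = S_D M p \<alpha> F b f x"
proof -
  have "AE x in M. \<forall>g\<in>F. a g x = b g x"
    by (rule AE_finite_allI[OF assms(1)]) (rule assms(2))
  then show ?thesis by eventually_elim (simp add: S_D_def)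
qed

lemma (in nonsingular_action) S_H_cong_AE:
  assumes "finite F" "\<And>g. g \<in> F \<Longrightarrow> AE x in M. a g x = b g x"
  shows "AE x in M. S_H \<alpha> F a \<xi> h x = S_H \<alpha> F b \<xi> h x"
proof -
  have "AE x in M. \<forall>g\<in>F. a g (\<alpha> (- h) x) = b g (\<alpha> (- h) x)"
    by (rule AE_finite_allI[OF assms(1)]) (rule AE_compose[OF assms(2)])
  then show ?thesis by eventually_elim (simp add: S_H_def bar_op_def)
qed

section \<open>Comparing the two norms\<close>

locale lp_crossed_product = nonsingular_action M \<alpha>
  for M :: "'a measure" and \<alpha> :: "'g::group_add \<Rightarrow> 'a \<Rightarrow> 'a" +
  fixes p :: real and F :: "'g set" and a :: "'g \<Rightarrow> 'a \<Rightarrow> ('e::banach \<Rightarrow>\<^sub>L 'e)"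
  assumes p_pos: "0 < p" and finite_F: "finite F"
    and a_measurable: "\<And>g. g \<in> F \<Longrightarrow> strongly_measurable_everywhere M (a g)"
begin

lemma Top_eq: "Top M p \<alpha> g f x = jacobian g x powr (1/p) *\<^sub>R f (\<alpha> (- g) x)"
  unfolding Top_def jacobian_def ..

lemma S_D_strongly_measurable:
  "strongly_measurable_everywhere M f \<Longrightarrow> strongly_measurable_everywhere M (S_D M p \<alpha> F a f)"
  unfolding S_D_def[abs_def] Top_eq
  by (intro strongly_measurable_everywhere_sum finite_F strongly_measurable_everywhere_blinfun_apply
      a_measurable strongly_measurable_everywhere_scaleR
      strongly_measurable_everywhere_compose_measurable[OF \<alpha>_measurable]) auto

lemma S_H_strongly_measurable:
  "(\<And>k. strongly_measurable_everywhere M (\<xi> k)) \<Longrightarrow> strongly_measurable_everywhere M (S_H \<alpha> F a \<xi> h)"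
  unfolding S_H_def[abs_def] bar_op_def Vop_def
  by (intro strongly_measurable_everywhere_sum finite_F strongly_measurable_everywhere_blinfun_apply
      strongly_measurable_everywhere_compose_measurable[OF \<alpha>_measurable] a_measurable) auto

definition glue :: "'g set \<Rightarrow> 'a set \<Rightarrow> ('g \<Rightarrow> 'a \<Rightarrow> 'e) \<Rightarrow> 'a \<Rightarrow> 'e" where
  "glue L D \<xi> y = (\<Sum>k\<in>L. indicator D (\<alpha> k y) *\<^sub>R jacobian k (\<alpha> k y) powr (-1/p) *\<^sub>R \<xi> k (\<alpha> k y))"

lemma glue_strongly_measurable:
  assumes "D \<in> sets M" "finite L" "\<And>k. k \<in> L \<Longrightarrow> strongly_measurable_everywhere M (\<xi> k)"
  shows "strongly_measurable_everywhere M (glue L D \<xi>)"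
  unfolding glue_def[abs_def] using assms
  by (intro strongly_measurable_everywhere_sum strongly_measurable_everywhere_scaleR
      strongly_measurable_everywhere_compose_measurable[OF \<alpha>_measurable]) auto

lemma glue_eq:
  assumes "disjoint_family_on (\<lambda>k. \<alpha> k -` D) L" "finite L" "k \<in> L" "\<alpha> k y \<in> D"
  shows "glue L D \<xi> y = jacobian k (\<alpha> k y) powr (-1/p) *\<^sub>R \<xi> k (\<alpha> k y)"
proof -
  have "indicator D (\<alpha> k' y) = (if k' = k then 1 else 0 :: real)" if "k' \<in> L" for k'
    using assms(1,3,4) that by (auto simp: disjoint_family_on_def indicator_def)
  then have "glue L D \<xi> y
      = (\<Sum>k'\<in>L. if k' = k then jacobian k' (\<alpha> k' y) powr (-1/p) *\<^sub>R \<xi> k' (\<alpha> k' y) else 0)"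
    unfolding glue_def by (intro sum.cong) auto
  also have "\<dots> = jacobian k (\<alpha> k y) powr (-1/p) *\<^sub>R \<xi> k (\<alpha> k y)"
    using assms(2,3) by simp
  finally show ?thesis .
qed

lemma norm_glue_powr:
  assumes "disjoint_family_on (\<lambda>k. \<alpha> k -` D) L" "finite L"
  shows "norm (glue L D \<xi> y) powr p
    = (\<Sum>k\<in>L. indicator D (\<alpha> k y) * norm (\<xi> k (\<alpha> k y)) powr p / jacobian k (\<alpha> k y))"
proof (cases "\<exists>k\<in>L. \<alpha> k y \<in> D")
  case True
  then obtain k where k: "k \<in> L" "\<alpha> k y \<in> D" by blast
  have "(\<Sum>k\<in>L. indicator D (\<alpha> k y) * norm (\<xi> k (\<alpha> k y)) powr p / jacobian k (\<alpha> k y))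
      = (\<Sum>k'\<in>L. norm (\<xi> k' (\<alpha> k' y)) powr p / jacobian k' (\<alpha> k' y) * indicator (\<alpha> k' -` D) y)"
    by (intro sum.cong) (auto simp: indicator_def)
  also have "\<dots> = norm (\<xi> k (\<alpha> k y)) powr p / jacobian k (\<alpha> k y)"
    using assms k by (intro sum_indicator_disjoint_family) auto
  also have "\<dots> = norm (glue L D \<xi> y) powr p"
    using glue_eq[OF assms k] p_pos jacobian_nonneg[of k]
    by (simp add: powr_mult powr_powr divide_inverse mult.commute)
  finally show ?thesis ..
next
  case False
  then show ?thesis by (simp add: glue_def)
qed

lemma Lp_pow_glue:
  assumes D [measurable]: "D \<in> sets M" and L: "finite L"
    and disjoint: "disjoint_family_on (\<lambda>k. \<alpha> k -` D) L"
    and \<xi>: "\<And>k. k \<in> L \<Longrightarrow> (\<lambda>x. norm (\<xi> k x)) \<in> borel_measurable M"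
  shows "Lp_pow M p (glue L D \<xi>) = (\<Sum>k\<in>L. \<integral>\<^sup>+x\<in>D. ennreal (norm (\<xi> k x) powr p) \<partial>M)"
proof -
  have "Lp_pow M p (glue L D \<xi>) = (\<integral>\<^sup>+y. (\<Sum>k\<in>L.
      ennreal (indicator D (\<alpha> k y) * norm (\<xi> k (\<alpha> k y)) powr p / jacobian k (\<alpha> k y))) \<partial>M)"
    unfolding Lp_pow_def norm_glue_powr[OF disjoint L]
    by (intro nn_integral_cong) (simp add: sum_ennreal jacobian_nonneg)
  also have "\<dots> = (\<Sum>k\<in>L. \<integral>\<^sup>+y.
      ennreal (indicator D (\<alpha> k y) * norm (\<xi> k (\<alpha> k y)) powr p / jacobian k (\<alpha> k y)) \<partial>M)"
  proof (rule nn_integral_sum)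
    fix k assume "k \<in> L"
    note \<xi>[OF this, measurable]
    show "(\<lambda>y. ennreal (indicator D (\<alpha> k y) * norm (\<xi> k (\<alpha> k y)) powr p / jacobian k (\<alpha> k y)))
        \<in> borel_measurable M"
      by measurable
  qed
  also have "\<dots> = (\<Sum>k\<in>L. \<integral>\<^sup>+x\<in>D. ennreal (norm (\<xi> k x) powr p) \<partial>M)"
  proof (rule sum.cong[OF refl])
    fix k assume "k \<in> L"
    note \<xi>[OF this, measurable]
    have "(\<integral>\<^sup>+y. ennreal (indicator D (\<alpha> k y) * norm (\<xi> k (\<alpha> k y)) powr p / jacobian k (\<alpha> k y)) \<partial>M)
        = (\<integral>\<^sup>+x. ennreal (indicator D x * norm (\<xi> k x) powr p) \<partial>M)"
      by (rule nn_integral_compose_divide_jacobian) auto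
    then show "(\<integral>\<^sup>+y. ennreal (indicator D (\<alpha> k y) * norm (\<xi> k (\<alpha> k y)) powr p / jacobian k (\<alpha> k y)) \<partial>M)
        = (\<integral>\<^sup>+x\<in>D. ennreal (norm (\<xi> k x) powr p) \<partial>M)"
      by (auto intro!: nn_integral_cong split: split_indicator)
  qed
  finally show ?thesis .
qed

lemma S_D_glue:
  assumes disjoint: "disjoint_family_on (\<lambda>k. \<alpha> k -` D) L" and L: "finite L"
    and shift: "\<And>g. g \<in> F \<Longrightarrow> h + g \<in> L" and "\<alpha> h x \<in> D"
    and cocycle: "\<And>g. g \<in> F \<Longrightarrow> jacobian h (\<alpha> h x) * jacobian g x = jacobian (h + g) (\<alpha> h x)"
    and pos: "\<And>g. g \<in> F \<Longrightarrow> 0 < jacobian g x"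
  shows "S_D M p \<alpha> F a (glue L D \<xi>) x = jacobian h (\<alpha> h x) powr (-1/p) *\<^sub>R S_H \<alpha> F a \<xi> h (\<alpha> h x)"
proof -
  have "Top M p \<alpha> g (glue L D \<xi>) x = jacobian h (\<alpha> h x) powr (-1/p) *\<^sub>R \<xi> (h + g) (\<alpha> h x)"
    if g: "g \<in> F" for g
  proof -
    have "\<alpha> (h + g) (\<alpha> (- g) x) = \<alpha> h x" by (simp add: \<alpha>_add_apply)
    then have glue_at: "glue L D \<xi> (\<alpha> (- g) x)
        = jacobian (h + g) (\<alpha> h x) powr (-1/p) *\<^sub>R \<xi> (h + g) (\<alpha> h x)"
      using glue_eq[OF disjoint L shift[OF g], of "\<alpha> (- g) x"] \<open>\<alpha> h x \<in> D\<close> by simp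
    have "jacobian g x powr (1/p) * jacobian (h + g) (\<alpha> h x) powr (-1/p)
        = jacobian h (\<alpha> h x) powr (-1/p) * (jacobian g x powr (1/p) * jacobian g x powr (-1/p))"
      unfolding cocycle[OF g, symmetric] by (simp add: powr_mult jacobian_nonneg ac_simps)
    also have "\<dots> = jacobian h (\<alpha> h x) powr (-1/p)"
      using pos[OF g] by (simp add: powr_add[symmetric])
    finally show ?thesis using glue_at by (simp add: Top_eq)
  qed
  then show ?thesis
    by (simp add: S_D_def S_H_def bar_op_def Vop_def scaleR_sum_right blinfun.scaleR_right)
qed

lemma nn_integral_S_D_glue:
  assumes D [measurable]: "D \<in> sets M" and L: "finite L"
    and disjoint: "disjoint_family_on (\<lambda>k. \<alpha> k -` D) L"
    and shift: "\<And>g. g \<in> F \<Longrightarrow> h + g \<in> L"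
    and \<xi>: "\<And>k. strongly_measurable_everywhere M (\<xi> k)"
  shows "(\<integral>\<^sup>+x\<in>\<alpha> h -` D. ennreal (norm (S_D M p \<alpha> F a (glue L D \<xi>) x) powr p) \<partial>M)
    = (\<integral>\<^sup>+x\<in>D. ennreal (norm (S_H \<alpha> F a \<xi> h x) powr p) \<partial>M)"
proof -
  note S_H_strongly_measurable[OF \<xi>, THEN strongly_measurable_everywhere_imp_borel_norm, measurable]
  have cocycle: "AE x in M. \<forall>g\<in>F. jacobian h (\<alpha> h x) * jacobian g x = jacobian (h + g) (\<alpha> h x)"
  proof (rule AE_finite_allI[OF finite_F])
    show "AE x in M. jacobian h (\<alpha> h x) * jacobian g x = jacobian (h + g) (\<alpha> h x)" for g
      using AE_compose[OF jacobian_cocycle[of h g], of h] by simp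
  qed
  have pos: "AE x in M. \<forall>g\<in>F. 0 < jacobian g x"
    by (rule AE_finite_allI[OF finite_F]) (use rho_eq_jacobian in \<open>auto elim: eventually_mono\<close>)
  have "(\<integral>\<^sup>+x\<in>D. ennreal (norm (S_H \<alpha> F a \<xi> h x) powr p) \<partial>M)
      = (\<integral>\<^sup>+x. ennreal (indicator D x * norm (S_H \<alpha> F a \<xi> h x) powr p) \<partial>M)"
    by (auto intro!: nn_integral_cong split: split_indicator)
  also have "\<dots> = (\<integral>\<^sup>+x. ennreal (indicator D (\<alpha> h x) * norm (S_H \<alpha> F a \<xi> h (\<alpha> h x)) powr p
      / jacobian h (\<alpha> h x)) \<partial>M)"
    by (rule nn_integral_compose_divide_jacobian[symmetric]) auto
  also have "\<dots> = (\<integral>\<^sup>+x. ennreal (indicator D (\<alpha> h x) * norm (S_D M p \<alpha> F a (glue L D \<xi>) x) powr p) \<partial>M)"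
    using cocycle pos
  proof (intro nn_integral_cong_AE, eventually_elim)
    case (elim x)
    show ?case
    proof (cases "\<alpha> h x \<in> D")
      case True
      then show ?thesis
        using S_D_glue[OF disjoint L shift True] elim jacobian_nonneg[of h] p_pos
        by (simp add: powr_mult powr_powr divide_inverse)
    qed simp
  qed
  also have "\<dots> = (\<integral>\<^sup>+x\<in>\<alpha> h -` D. ennreal (norm (S_D M p \<alpha> F a (glue L D \<xi>) x) powr p) \<partial>M)"
    by (auto intro!: nn_integral_cong split: split_indicator)
  finally show ?thesis ..
qed

context
  fixes n :: real
  assumes n_nonneg: "0 \<le> n" and opnorm_D_le: "opnorm_D M p (S_D M p \<alpha> F a) \<le> ennreal n"
begin

lemma Lp_pow_S_D_le:
  "strongly_measurable_everywhere M f \<Longrightarrow> Lp_pow M p f < \<infinity>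
    \<Longrightarrow> Lp_pow M p (S_D M p \<alpha> F a f) \<le> ennreal (n powr p) * Lp_pow M p f"
  by (rule Lp_pow_le_opnorm_D[OF p_pos n_nonneg opnorm_D_le])
    (auto intro: strongly_measurable_everywhere_imp_borel_norm S_D_strongly_measurable simp: S_D_scaleR)

lemma set_nn_integral_S_H_le:
  assumes D [measurable]: "D \<in> sets M" and K: "finite K" and L: "finite L"
    and shift: "\<And>h g. h \<in> K \<Longrightarrow> g \<in> F \<Longrightarrow> h + g \<in> L"
    and disjoint: "disjoint_family_on (\<lambda>k. \<alpha> k -` D) (K \<union> L)"
    and \<xi>: "\<And>k. strongly_measurable_everywhere M (\<xi> k)"
    and finite_\<xi>: "\<And>k. k \<in> L \<Longrightarrow> Lp_pow M p (\<xi> k) < \<infinity>"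
  shows "(\<Sum>h\<in>K. \<integral>\<^sup>+x\<in>D. ennreal (norm (S_H \<alpha> F a \<xi> h x) powr p) \<partial>M)
    \<le> ennreal (n powr p) * (\<Sum>k\<in>L. \<integral>\<^sup>+x\<in>D. ennreal (norm (\<xi> k x) powr p) \<partial>M)"
proof -
  define f where "f = glue L D \<xi>"
  have disjoint_K: "disjoint_family_on (\<lambda>k. \<alpha> k -` D) K"
    and disjoint_L: "disjoint_family_on (\<lambda>k. \<alpha> k -` D) L"
    using disjoint by (auto intro: disjoint_family_on_mono)
  have f: "strongly_measurable_everywhere M f"
    unfolding f_def using D L \<xi> by (rule glue_strongly_measurable)
  note S_D_strongly_measurable[OF f, THEN strongly_measurable_everywhere_imp_borel_norm, measurable]
  have Lp_pow_f: "Lp_pow M p f = (\<Sum>k\<in>L. \<integral>\<^sup>+x\<in>D. ennreal (norm (\<xi> k x) powr p) \<partial>M)"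
    unfolding f_def using D L disjoint_L
    by (rule Lp_pow_glue) (rule strongly_measurable_everywhere_imp_borel_norm[OF \<xi>])
  have "Lp_pow M p f < \<infinity>"
    unfolding Lp_pow_f using L le_less_trans[OF set_nn_integral_le_Lp_pow finite_\<xi>] by simp
  have "(\<Sum>h\<in>K. \<integral>\<^sup>+x\<in>D. ennreal (norm (S_H \<alpha> F a \<xi> h x) powr p) \<partial>M)
      = (\<Sum>h\<in>K. \<integral>\<^sup>+x\<in>\<alpha> h -` D. ennreal (norm (S_D M p \<alpha> F a f x) powr p) \<partial>M)"
    unfolding f_def using D L disjoint_L shift \<xi>
    by (intro sum.cong refl nn_integral_S_D_glue[symmetric]) auto
  also have "\<dots> \<le> Lp_pow M p (S_D M p \<alpha> F a f)"
    unfolding Lp_pow_def using K disjoint_K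
    by (rule sum_set_nn_integral_le_nn_integral) (auto simp: vimage_sets)
  also have "\<dots> \<le> ennreal (n powr p) * Lp_pow M p f"
    using f \<open>Lp_pow M p f < \<infinity>\<close> by (rule Lp_pow_S_D_le)
  finally show ?thesis unfolding Lp_pow_f .
qed

lemma AE_sum_norm_S_H_le:
  assumes free: "metrically_free M \<alpha>" and K: "finite K" and L: "finite L"
    and shift: "\<And>h g. h \<in> K \<Longrightarrow> g \<in> F \<Longrightarrow> h + g \<in> L"
    and \<xi>: "\<And>k. strongly_measurable_everywhere M (\<xi> k)"
    and finite_\<xi>: "\<And>k. k \<in> L \<Longrightarrow> Lp_pow M p (\<xi> k) < \<infinity>"
  shows "AE x in M. (\<Sum>h\<in>K. ennreal (norm (S_H \<alpha> F a \<xi> h x) powr p))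
    \<le> ennreal (n powr p) * (\<Sum>k\<in>L. ennreal (norm (\<xi> k x) powr p))"
proof -
  note S_H_strongly_measurable[OF \<xi>, THEN strongly_measurable_everywhere_imp_borel_norm, measurable]
  note \<xi>[THEN strongly_measurable_everywhere_imp_borel_norm, measurable]
  define U where "U x = (\<Sum>h\<in>K. ennreal (norm (S_H \<alpha> F a \<xi> h x) powr p))" for x
  define V where "V x = ennreal (n powr p) * (\<Sum>k\<in>L. ennreal (norm (\<xi> k x) powr p))" for x
  have "AE x in M. U x \<le> V x"
  proof (rule AE_le_if_local_nn_integral_le)
    show "U \<in> borel_measurable M" "V \<in> borel_measurable M"
      unfolding U_def[abs_def] V_def[abs_def] by measurable
    fix E assume "E \<in> sets M" "0 < emeasure M E"
    then obtain D where D: "D \<in> sets M" "D \<subseteq> E" "0 < emeasure M D"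
      and disjoint: "disjoint_family_on (\<lambda>k. \<alpha> k -` D) (K \<union> L)"
      using metrically_free_disjoint_subset[OF free] K L by (metis finite_UnI)
    have [measurable]: "D \<in> sets M" by (rule D(1))
    have lhs: "(\<integral>\<^sup>+x\<in>D. U x \<partial>M) = (\<Sum>h\<in>K. \<integral>\<^sup>+x\<in>D. ennreal (norm (S_H \<alpha> F a \<xi> h x) powr p) \<partial>M)"
      unfolding U_def by (rule set_nn_integral_sum) measurable
    have "(\<integral>\<^sup>+x\<in>D. V x \<partial>M) = ennreal (n powr p) * (\<integral>\<^sup>+x\<in>D. (\<Sum>k\<in>L. ennreal (norm (\<xi> k x) powr p)) \<partial>M)"
      unfolding V_def mult.assoc by (rule nn_integral_cmult) measurable
    also have "(\<integral>\<^sup>+x\<in>D. (\<Sum>k\<in>L. ennreal (norm (\<xi> k x) powr p)) \<partial>M)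
        = (\<Sum>k\<in>L. \<integral>\<^sup>+x\<in>D. ennreal (norm (\<xi> k x) powr p) \<partial>M)"
      by (rule set_nn_integral_sum) measurable
    finally have rhs: "(\<integral>\<^sup>+x\<in>D. V x \<partial>M)
        = ennreal (n powr p) * (\<Sum>k\<in>L. \<integral>\<^sup>+x\<in>D. ennreal (norm (\<xi> k x) powr p) \<partial>M)" .
    have "(\<integral>\<^sup>+x\<in>D. U x \<partial>M) \<le> (\<integral>\<^sup>+x\<in>D. V x \<partial>M)"
      unfolding lhs rhs using D(1) K L shift disjoint \<xi> finite_\<xi> by (rule set_nn_integral_S_H_le)
    moreover have "(\<Sum>k\<in>L. \<integral>\<^sup>+x\<in>D. ennreal (norm (\<xi> k x) powr p) \<partial>M) < \<infinity>"
      using L le_less_trans[OF set_nn_integral_le_Lp_pow finite_\<xi>] by simp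
    ultimately show "\<exists>D\<in>sets M. D \<subseteq> E \<and> 0 < emeasure M D \<and>
        (\<integral>\<^sup>+x\<in>D. U x \<partial>M) \<le> (\<integral>\<^sup>+x\<in>D. V x \<partial>M) \<and> (\<integral>\<^sup>+x\<in>D. V x \<partial>M) < \<infinity>"
      using D by (intro bexI[of _ D]) (auto simp: rhs ennreal_mult_less_top)
  qed
  then show ?thesis unfolding U_def V_def .
qed

lemma sum_Lp_pow_S_H_le:
  assumes free: "metrically_free M \<alpha>" and K: "finite K" and L: "finite L"
    and shift: "\<And>h g. h \<in> K \<Longrightarrow> g \<in> F \<Longrightarrow> h + g \<in> L"
    and \<xi>: "\<And>k. strongly_measurable_everywhere M (\<xi> k)"
    and finite_\<xi>: "\<And>k. k \<in> L \<Longrightarrow> Lp_pow M p (\<xi> k) < \<infinity>"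
  shows "(\<Sum>h\<in>K. Lp_pow M p (S_H \<alpha> F a \<xi> h)) \<le> ennreal (n powr p) * (\<Sum>k\<in>L. Lp_pow M p (\<xi> k))"
proof -
  note S_H_strongly_measurable[OF \<xi>, THEN strongly_measurable_everywhere_imp_borel_norm, measurable]
  note \<xi>[THEN strongly_measurable_everywhere_imp_borel_norm, measurable]
  have "(\<Sum>h\<in>K. Lp_pow M p (S_H \<alpha> F a \<xi> h))
      = (\<integral>\<^sup>+x. (\<Sum>h\<in>K. ennreal (norm (S_H \<alpha> F a \<xi> h x) powr p)) \<partial>M)"
    unfolding Lp_pow_def by (rule nn_integral_sum[symmetric]) measurable
  also have "\<dots> \<le> (\<integral>\<^sup>+x. ennreal (n powr p) * (\<Sum>k\<in>L. ennreal (norm (\<xi> k x) powr p)) \<partial>M)"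
    by (rule nn_integral_mono_AE[OF AE_sum_norm_S_H_le[OF free K L shift \<xi> finite_\<xi>]])
  also have "\<dots> = ennreal (n powr p) * (\<integral>\<^sup>+x. (\<Sum>k\<in>L. ennreal (norm (\<xi> k x) powr p)) \<partial>M)"
    by (rule nn_integral_cmult) measurable
  also have "(\<integral>\<^sup>+x. (\<Sum>k\<in>L. ennreal (norm (\<xi> k x) powr p)) \<partial>M) = (\<Sum>k\<in>L. Lp_pow M p (\<xi> k))"
    unfolding Lp_pow_def by (rule nn_integral_sum) measurable
  finally show ?thesis .
qed

lemma lp_pow_H_S_H_le:
  assumes free: "metrically_free M \<alpha>"
    and \<xi>: "\<And>k. strongly_measurable_everywhere M (\<xi> k)" "\<And>k. Lp_pow M p (\<xi> k) < \<infinity>"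
  shows "lp_pow_H M p (S_H \<alpha> F a \<xi>) \<le> ennreal (n powr p) * lp_pow_H M p \<xi>"
proof (rule lp_pow_H_leI)
  fix K :: "'g set" assume K: "finite K"
  define L where "L = (\<lambda>(h, g). h + g) ` (K \<times> F)"
  have L: "finite L" unfolding L_def using K finite_F by simp
  have shift: "h + g \<in> L" if "h \<in> K" "g \<in> F" for h g
    unfolding L_def using that by (intro image_eqI[of _ _ "(h, g)"]) auto
  have "(\<Sum>h\<in>K. Lp_pow M p (S_H \<alpha> F a \<xi> h)) \<le> ennreal (n powr p) * (\<Sum>k\<in>L. Lp_pow M p (\<xi> k))"
    using free K L shift \<xi> by (rule sum_Lp_pow_S_H_le)
  also have "\<dots> \<le> ennreal (n powr p) * lp_pow_H M p \<xi>"
    by (intro mult_left_mono lp_pow_H_ge_sum L) simp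
  finally show "(\<Sum>h\<in>K. Lp_pow M p (S_H \<alpha> F a \<xi> h)) \<le> ennreal (n powr p) * lp_pow_H M p \<xi>" .
qed

lemma opnorm_H_S_H_le:
  assumes free: "metrically_free M \<alpha>"
  shows "opnorm_H M p (S_H \<alpha> F a) \<le> ennreal n"
  unfolding opnorm_H_def
proof (rule SUP_least)
  fix \<xi> :: "'g \<Rightarrow> 'a \<Rightarrow> 'e" assume "\<xi> \<in> {\<xi> \<in> lpH M p. lp_norm_H M p \<xi> \<le> 1}"
  then have \<xi>: "\<And>k. strongly_measurable M (\<xi> k)" "\<And>k. Lp_pow M p (\<xi> k) < \<infinity>"
    and unit: "lp_pow_H M p \<xi> \<le> 1"
    unfolding lpH_def LpD_def using lp_norm_H_le_iff[of 1 p M \<xi>] p_pos by auto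
  have "\<exists>\<eta>. \<forall>k\<in>UNIV. strongly_measurable_everywhere M (\<eta> k) \<and> (AE x in M. \<xi> k x = \<eta> k x)"
    by (rule strongly_measurable_family_AE_eq_everywhere) (rule \<xi>(1))
  then obtain \<eta> where "\<forall>k\<in>UNIV. strongly_measurable_everywhere M (\<eta> k) \<and> (AE x in M. \<xi> k x = \<eta> k x)" ..
  then have \<eta>: "\<And>k. strongly_measurable_everywhere M (\<eta> k)"
    and \<xi>_eq_\<eta>: "\<And>k. AE x in M. \<xi> k x = \<eta> k x"
    by auto
  have "Lp_pow M p (\<eta> k) = Lp_pow M p (\<xi> k)" for k
    using \<xi>_eq_\<eta>[of k] by (intro Lp_pow_cong_AE) (auto elim: eventually_mono)
  then have \<eta>_finite: "Lp_pow M p (\<eta> k) < \<infinity>" and "lp_pow_H M p \<eta> = lp_pow_H M p \<xi>" for k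
    using \<xi>(2) by (simp_all add: lp_pow_H_def)
  moreover have "lp_pow_H M p (S_H \<alpha> F a \<xi>) = lp_pow_H M p (S_H \<alpha> F a \<eta>)"
  proof (rule lp_pow_H_cong_AE)
    fix h
    have "AE x in M. \<forall>g\<in>F. \<xi> (h + g) x = \<eta> (h + g) x"
      by (rule AE_finite_allI[OF finite_F]) (rule \<xi>_eq_\<eta>)
    then show "AE x in M. norm (S_H \<alpha> F a \<xi> h x) = norm (S_H \<alpha> F a \<eta> h x)"
      by eventually_elim (simp add: S_H_def bar_op_def Vop_def)
  qed
  ultimately have "lp_pow_H M p (S_H \<alpha> F a \<xi>) \<le> ennreal (n powr p) * lp_pow_H M p \<xi>"
    using lp_pow_H_S_H_le[where \<xi>=\<eta>, OF free \<eta> \<eta>_finite] by simp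
  also have "\<dots> \<le> ennreal (n powr p)"
    using mult_left_mono[OF unit, of "ennreal (n powr p)"] by simp
  finally show "lp_norm_H M p (S_H \<alpha> F a \<xi>) \<le> ennreal n"
    using lp_norm_H_le_iff[OF n_nonneg p_pos] by blast
qed

end

lemma opnorm_H_le_opnorm_D:
  assumes "metrically_free M \<alpha>"
  shows "opnorm_H M p (S_H \<alpha> F a) \<le> opnorm_D M p (S_D M p \<alpha> F a)"
proof (cases "opnorm_D M p (S_D M p \<alpha> F a)")
  case (real n)
  then show ?thesis using opnorm_H_S_H_le[OF _ _ assms, of n] by simp
qed simp

end

theorem lemma3p2:
  fixes M :: "'a measure" and p :: real
    and \<alpha> :: "'g::group_add \<Rightarrow> 'a \<Rightarrow> 'a"
    and F :: "'g set" and a :: "'g \<Rightarrow> 'a \<Rightarrow> ('e::banach \<Rightarrow>\<^sub>L 'e)"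
  assumes "sigma_finite_measure M"
    and "1 < p"
    and "\<And>g h. \<alpha> (g + h) = \<alpha> g \<circ> \<alpha> h"
    and "\<alpha> 0 = id"
    and "\<And>g. \<alpha> g \<in> measurable M M"
    and "\<And>g N. N \<in> null_sets M \<Longrightarrow> \<alpha> g -` N \<inter> space M \<in> null_sets M"
    and "metrically_free M \<alpha>"
    and "finite F"
    and "\<And>g. g \<in> F \<Longrightarrow> a g \<in> LinfA M"
  shows "opnorm_H M p (S_H \<alpha> F a) \<le> opnorm_D M p (S_D M p \<alpha> F a)"
proof -
  interpret nonsingular_action M \<alpha>
    by (rule nonsingular_action.intro) (fact assms)+
  have "\<exists>b. \<forall>g\<in>F. strongly_measurable_everywhere M (b g) \<and> (AE x in M. a g x = b g x)"
    by (rule strongly_measurable_family_AE_eq_everywhere) (use assms(9) in \<open>simp add: LinfA_def\<close>)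
  then obtain b where "\<forall>g\<in>F. strongly_measurable_everywhere M (b g) \<and> (AE x in M. a g x = b g x)" ..
  then have b: "\<And>g. g \<in> F \<Longrightarrow> strongly_measurable_everywhere M (b g)"
    and a_eq_b: "\<And>g. g \<in> F \<Longrightarrow> AE x in M. a g x = b g x"
    by auto
  interpret lp_crossed_product M \<alpha> p F b
    by (rule lp_crossed_product.intro[OF nonsingular_action_axioms], unfold_locales)
      (use assms b in auto)
  have "opnorm_H M p (S_H \<alpha> F a) = opnorm_H M p (S_H \<alpha> F b)"
    by (rule opnorm_H_cong_AE, rule S_H_cong_AE[OF \<open>finite F\<close> a_eq_b])
  also have "\<dots> \<le> opnorm_D M p (S_D M p \<alpha> F b)"
    using \<open>metrically_free M \<alpha>\<close> by (rule opnorm_H_le_opnorm_D)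
  also have "\<dots> = opnorm_D M p (S_D M p \<alpha> F a)"
    by (rule sym, rule opnorm_D_cong_AE, rule S_D_cong_AE[OF \<open>finite F\<close> a_eq_b])
  finally show ?thesis .
qed

end
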